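(* A linear code $C\subseteq\mathbb{F}_3^n$ is trifferent if and only if it is minimal.
   Context: A linear code $C\subseteq\mathbb{F}_3^n$ is trifferent if for any three distinct $x,y,z\in C$ there is a coordinate $i$ with $\{x_i,y_i,z_i\}=\mathbb{F}_3$. The support of $v$ is $\mathrm{supp}(v)=\{i: v_i\ne 0\}$. A linear code $C$ is minimal if for all $u,v\in C$, $\mathrm{supp}(u)\subsetneq\mathrm{supp}(v)$ implies $u=0$ (equivalently, every nonzero codeword has inclusion-minimal support among nonzero codewords). *)

theory Defs
  imports Main "HOL-Library.Numeral_Type"
begin

text \<open>Vectors of F_3^n are functions nat => 3 (the type 3 of integers mod 3 from
Numeral_Type) that vanish outside the coordinates 0..n-1.\<close>

definition vecs3 :: "nat \<Rightarrow> (nat \<Rightarrow> 3) set" where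
  "vecs3 n = {x. \<forall>i\<ge>n. x i = 0}"

definition linear_code :: "nat \<Rightarrow> (nat \<Rightarrow> 3) set \<Rightarrow> bool" where
  "linear_code n C \<longleftrightarrow> C \<subseteq> vecs3 n \<and> (\<lambda>_. 0) \<in> C
     \<and> (\<forall>x\<in>C. \<forall>y\<in>C. (\<lambda>i. x i + y i) \<in> C)
     \<and> (\<forall>a::3. \<forall>x\<in>C. (\<lambda>i. a * x i) \<in> C)"

definition trifferent :: "nat \<Rightarrow> (nat \<Rightarrow> 3) set \<Rightarrow> bool" where
  "trifferent n C \<longleftrightarrow> (\<forall>x\<in>C. \<forall>y\<in>C. \<forall>z\<in>C. x \<noteq> y \<and> y \<noteq> z \<and> x \<noteq> z \<longrightarrow>
     (\<exists>i<n. {x i, y i, z i} = (UNIV :: 3 set)))"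

definition supp :: "nat \<Rightarrow> (nat \<Rightarrow> 3) \<Rightarrow> nat set" where
  "supp n v = {i. i < n \<and> v i \<noteq> 0}"

definition minimal_code :: "nat \<Rightarrow> (nat \<Rightarrow> 3) set \<Rightarrow> bool" where
  "minimal_code n C \<longleftrightarrow> (\<forall>u\<in>C. \<forall>v\<in>C. supp n u \<subset> supp n v \<longrightarrow> u = (\<lambda>_. 0))"

end

theory Submission
  imports Defs "HOL-Library.Function_Algebras"
begin

text \<open>Translating by a codeword, a linear code is trifferent iff any two distinct nonzero
  codewords p, q have a coordinate where p, q and 0 are pairwise distinct, i.e. where
  q = -p \<noteq> 0.
  If supp u \<subset> supp v with u \<noteq> 0, then v + u and v - u fail this test: off supp u they agree,
  and on supp u one of them vanishes because v = \<plusminus>u there.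
  Conversely, if distinct nonzero p, q fail the test, then at each coordinate
  p = 0, q = 0 or p = q, so supp p and supp q lie in supp (p + q); minimality forces both
  to be equal to it, whence p = q.\<close>

lemma exhaust_3: "(x::3) = 0 \<or> x = 1 \<or> x = 2"
proof (cases x)
  case (of_int z)
  then have "z = 0 \<or> z = 1 \<or> z = 2" by simp presburger
  then show ?thesis using of_int by auto
qed

lemma insert_3_eq_UNIV_iff: "{a, b, c} = (UNIV :: 3 set) \<longleftrightarrow> a \<noteq> b \<and> b \<noteq> c \<and> a \<noteq> c"
proof
  assume "{a, b, c} = (UNIV :: 3 set)"
  then have "card {a, b, c} = 3" by simp
  then show "a \<noteq> b \<and> b \<noteq> c \<and> a \<noteq> c" by (auto simp: card_insert_if split: if_splits)
next
  assume "a \<noteq> b \<and> b \<noteq> c \<and> a \<noteq> c"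
  then have "card {a, b, c} = CARD(3)" by simp
  then show "{a, b, c} = (UNIV :: 3 set)" by (simp add: card_eq_UNIV_imp_eq_UNIV)
qed

lemma nonzero_3_eq_or_eq_neg: "(a::3) \<noteq> 0 \<Longrightarrow> b \<noteq> 0 \<Longrightarrow> b = a \<or> b = - a"
  using exhaust_3[of a] exhaust_3[of b] by auto

lemma add_3_neq_diff: "(a::3) \<noteq> 0 \<Longrightarrow> b + a \<noteq> b - a"
  using exhaust_3[of a] exhaust_3[of b] by auto

lemma linear_code_zero: "linear_code n C \<Longrightarrow> 0 \<in> C"
  unfolding linear_code_def zero_fun_def by blast

lemma linear_code_add: "linear_code n C \<Longrightarrow> x \<in> C \<Longrightarrow> y \<in> C \<Longrightarrow> x + y \<in> C"
  unfolding linear_code_def plus_fun_def by blast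

lemma linear_code_uminus:
  assumes "linear_code n C" "x \<in> C"
  shows "- x \<in> C"
proof -
  have "(\<lambda>i. 2 * x i) \<in> C" using assms unfolding linear_code_def by blast
  moreover have "(\<lambda>i. 2 * x i) = - x"
  proof
    fix i
    show "2 * x i = (- x) i" using exhaust_3[of "x i"] by auto
  qed
  ultimately show ?thesis by simp
qed

lemma linear_code_diff: "linear_code n C \<Longrightarrow> x \<in> C \<Longrightarrow> y \<in> C \<Longrightarrow> x - y \<in> C"
  unfolding diff_conv_add_uminus by (intro linear_code_add linear_code_uminus)

lemma linear_code_eqI:
  assumes "linear_code n C" "x \<in> C" "y \<in> C" "\<And>i. i < n \<Longrightarrow> x i = y i"
  shows "x = y"
proof
  fix i
  show "x i = y i"
  proof (cases "i < n")
    case False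
    have "x \<in> vecs3 n" "y \<in> vecs3 n" using assms(1-3) unfolding linear_code_def by blast+
    with False show ?thesis unfolding vecs3_def by simp
  qed (fact assms(4))
qed

lemma minimal_codeD:
  assumes "minimal_code n C" "u \<in> C" "v \<in> C" "u \<noteq> 0" "supp n u \<subseteq> supp n v"
  shows "supp n u = supp n v"
  using assms unfolding minimal_code_def zero_fun_def by blast

lemma linear_code_trifferentD:
  assumes "linear_code n C" "trifferent n C" "p \<in> C" "q \<in> C" "p \<noteq> 0" "q \<noteq> 0" "p \<noteq> q"
  obtains i where "i < n" "p i \<noteq> 0" "q i \<noteq> 0" "p i \<noteq> q i"
proof -
  have "0 \<in> C" using assms(1) by (rule linear_code_zero)
  with assms(2-7) obtain i where "i < n" "{0 i, p i, q i} = UNIV"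
    unfolding trifferent_def by metis
  then show ?thesis using that unfolding insert_3_eq_UNIV_iff by auto
qed

lemma linear_code_trifferentI:
  assumes code: "linear_code n C"
    and separating: "\<And>p q. p \<in> C \<Longrightarrow> q \<in> C \<Longrightarrow> p \<noteq> 0 \<Longrightarrow> q \<noteq> 0 \<Longrightarrow> p \<noteq> q \<Longrightarrow>
      \<exists>i<n. p i \<noteq> 0 \<and> q i \<noteq> 0 \<and> p i \<noteq> q i"
  shows "trifferent n C"
  unfolding trifferent_def
proof (intro ballI impI)
  fix x y z assume "x \<in> C" "y \<in> C" "z \<in> C" "x \<noteq> y \<and> y \<noteq> z \<and> x \<noteq> z"
  then have "y - x \<in> C" "z - x \<in> C" "y - x \<noteq> 0" "z - x \<noteq> 0" "y - x \<noteq> z - x"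
    using linear_code_diff[OF code] by auto
  then obtain i where "i < n" "(y - x) i \<noteq> 0" "(z - x) i \<noteq> 0" "(y - x) i \<noteq> (z - x) i"
    using separating by blast
  then show "\<exists>i<n. {x i, y i, z i} = UNIV"
    unfolding insert_3_eq_UNIV_iff by auto
qed

lemma trifferent_imp_minimal_code:
  assumes code: "linear_code n C" and trifferent: "trifferent n C"
  shows "minimal_code n C"
  unfolding minimal_code_def
proof (intro ballI impI)
  fix u v assume "u \<in> C" "v \<in> C" and strict: "supp n u \<subset> supp n v"
  show "u = (\<lambda>_. 0)"
  proof (rule ccontr)
    assume "u \<noteq> (\<lambda>_. 0)"
    then obtain j where "u j \<noteq> 0" by auto
    from strict obtain k where "k \<in> supp n v" "k \<notin> supp n u" by blast
    then have "v k \<noteq> 0" "u k = 0" unfolding supp_def by simp_all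
    have "v + u \<in> C" "v - u \<in> C"
      using \<open>u \<in> C\<close> \<open>v \<in> C\<close> code by (simp_all add: linear_code_add linear_code_diff)
    moreover have "v + u \<noteq> 0" "v - u \<noteq> 0"
    proof -
      have "(v + u) k \<noteq> 0" "(v - u) k \<noteq> 0" using \<open>v k \<noteq> 0\<close> \<open>u k = 0\<close> by simp_all
      then show "v + u \<noteq> 0" "v - u \<noteq> 0" by (metis zero_fun_apply)+
    qed
    moreover have "v + u \<noteq> v - u"
    proof -
      have "(v + u) j \<noteq> (v - u) j" using add_3_neq_diff[OF \<open>u j \<noteq> 0\<close>] by simp
      then show ?thesis by metis
    qed
    ultimately obtain i where "i < n" "(v + u) i \<noteq> 0" "(v - u) i \<noteq> 0" "(v + u) i \<noteq> (v - u) i"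
      using linear_code_trifferentD[OF code trifferent] by metis
    show False
    proof (cases "u i = 0")
      case True
      then show False using \<open>(v + u) i \<noteq> (v - u) i\<close> by simp
    next
      case False
      then have "v i \<noteq> 0" using strict \<open>i < n\<close> unfolding supp_def by blast
      then have "v i = u i \<or> v i = - u i" using nonzero_3_eq_or_eq_neg[OF False] by blast
      then show False using \<open>(v + u) i \<noteq> 0\<close> \<open>(v - u) i \<noteq> 0\<close> by auto
    qed
  qed
qed

lemma minimal_code_imp_trifferent:
  assumes code: "linear_code n C" and minimal: "minimal_code n C"
  shows "trifferent n C"
proof (rule linear_code_trifferentI[OF code])
  fix p q assume "p \<in> C" "q \<in> C" "p \<noteq> 0" "q \<noteq> 0" "p \<noteq> q"
  show "\<exists>i<n. p i \<noteq> 0 \<and> q i \<noteq> 0 \<and> p i \<noteq> q i"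
  proof (rule ccontr)
    assume "\<not> ?thesis"
    then have collapsed: "p i = 0 \<or> q i = 0 \<or> p i = q i" if "i < n" for i
      using that by blast
    have "p + q \<in> C" using \<open>p \<in> C\<close> \<open>q \<in> C\<close> by (rule linear_code_add[OF code])
    have "(p + q) i \<noteq> 0" if "i < n" "p i \<noteq> 0 \<or> q i \<noteq> 0" for i
      using collapsed[OF that(1)] that(2) exhaust_3[of "p i"] exhaust_3[of "q i"] by auto
    then have "supp n p \<subseteq> supp n (p + q)" "supp n q \<subseteq> supp n (p + q)"
      unfolding supp_def by blast+
    then have "supp n p = supp n (p + q)" "supp n q = supp n (p + q)"
      using minimal_codeD[OF minimal _ \<open>p + q \<in> C\<close>] \<open>p \<in> C\<close> \<open>q \<in> C\<close> \<open>p \<noteq> 0\<close> \<open>q \<noteq> 0\<close>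
      by blast+
    then have "supp n p = supp n q" by simp
    have same_zeros: "p i = 0 \<longleftrightarrow> q i = 0" if "i < n" for i
    proof -
      have "i \<in> supp n p \<longleftrightarrow> i \<in> supp n q" by (simp add: \<open>supp n p = supp n q\<close>)
      with that show ?thesis unfolding supp_def by simp
    qed
    have "p i = q i" if "i < n" for i
      using collapsed[OF that] same_zeros[OF that] by auto
    then have "p = q" using linear_code_eqI[OF code \<open>p \<in> C\<close> \<open>q \<in> C\<close>] by blast
    then show False using \<open>p \<noteq> q\<close> by contradiction
  qed
qed

theorem theorem6p2:
  fixes n :: nat and C :: "(nat \<Rightarrow> 3) set"
  assumes "linear_code n C"
  shows "trifferent n C \<longleftrightarrow> minimal_code n C"
  using assms trifferent_imp_minimal_code minimal_code_imp_trifferent by blast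

end
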